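(* Let $\Omega\subset\mathbb R^d$, $d\in\{2,3\}$, be a bounded polyhedral Lipschitz domain, $V:=H^1_0(\Omega)$ with $\|v\|_V:=(\int_\Omega A_0\nabla v\cdot\nabla v\,dx)^{1/2}$ for a symmetric uniformly positive definite $A_0\in L^\infty$, and $V^*$ with the dual norm. Let $\mathcal U\subset V$ be open, $\mathcal F:V\to V^*$ Fréchet differentiable on $\mathcal U$, $\tilde u_h\in\mathcal U$, $\rho>0$ with $B_\rho:=\{w:\|w-\tilde u_h\|_V\le\rho\}\subset\mathcal U$, and $\mathcal L_w:=D\mathcal F(w)$. Assume: $\|\mathcal F(\tilde u_h)\|_{V^*}\le\mathfrak r$; the bilinear form $B_{\tilde u_h}(\delta u,v):=\langle\mathcal L_{\tilde u_h}\delta u,v\rangle$ is symmetric and satisfies $B_{\tilde u_h}(v,v)\ge\alpha\|v\|_V^2$ for all $v\in V$ with $\alpha>0$; $\|\mathcal L_w-\mathcal L_z\|_{\mathcal L(V,V^* )}\le L(\rho)\|w-z\|_V$ for all $w,z\in B_\rho$; and $u\in B_\rho$ satisfies $\mathcal F(u)=0$. Let $\mathcal J$ be a real functional, Fréchet differentiable on $\mathcal U$, with $\|D\mathcal J(w)-D\mathcal J(z)\|_{\mathcal L(V,\mathbb R)}\le M_{\mathcal J}(\rho)\|w-z\|_V$ for all $w,z\in B_\rho$, where $M_{\mathcal J}(\rho)\ge0$. Set $j_{\tilde u_h}:=D\mathcal J(\tilde u_h)\in V^*$, let $z_h\in V$ be arbitrary, and define $\mathcal G(z_h)\in V^*$ by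 $\langle\mathcal G(z_h),v\rangle:=j_{\tilde u_h}(v)-B_{\tilde u_h}(v,z_h)$. Then $\mathcal J(u)\in[\mathcal J(\tilde u_h)-E_{\mathcal J}(\rho;z_h),\ \mathcal J(\tilde u_h)+E_{\mathcal J}(\rho;z_h)]$, where $$E_{\mathcal J}(\rho;z_h):=|\langle\mathcal F(\tilde u_h),z_h\rangle|+\tfrac12L(\rho)\rho^2\|z_h\|_V+\bigl(\mathfrak r+\tfrac12L(\rho)\rho^2\bigr)\alpha^{-1}\|\mathcal G(z_h)\|_{V^*}+\tfrac12M_{\mathcal J}(\rho)\rho^2.$$
   Context: $\|\cdot\|_{\mathcal L(V,V^* )}$ is the operator norm and $\|\cdot\|_{\mathcal L(V,\mathbb R)}=\|\cdot\|_{V^*}$ the dual norm. In the paper $u$ is the solution whose existence and local uniqueness in $B_\rho$ was certified by a Newton–Kantorovich argument. *)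

theory Defs
  imports "HOL-Analysis.Analysis"
begin

definition G_fun :: "('a::real_normed_vector \<Rightarrow> ('a \<Rightarrow>\<^sub>L ('a \<Rightarrow>\<^sub>L real))) \<Rightarrow>
    ('a \<Rightarrow> ('a \<Rightarrow>\<^sub>L real)) \<Rightarrow> 'a \<Rightarrow> 'a \<Rightarrow> 'a \<Rightarrow> real" where
  "G_fun LF DJ uh zh = (\<lambda>v. DJ uh v - LF uh v zh)"

definition E_J :: "('a::real_normed_vector \<Rightarrow> ('a \<Rightarrow>\<^sub>L real)) \<Rightarrow>
    ('a \<Rightarrow> ('a \<Rightarrow>\<^sub>L ('a \<Rightarrow>\<^sub>L real))) \<Rightarrow> ('a \<Rightarrow> ('a \<Rightarrow>\<^sub>L real)) \<Rightarrow>
    'a \<Rightarrow> 'a \<Rightarrow> real \<Rightarrow> real \<Rightarrow> real \<Rightarrow> real \<Rightarrow> real \<Rightarrow> real" where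
  "E_J F LF DJ uh zh \<rho> r \<alpha> L\<rho> MJ =
     \<bar>F uh zh\<bar> + 1/2 * L\<rho> * \<rho>\<^sup>2 * norm zh
     + (r + 1/2 * L\<rho> * \<rho>\<^sup>2) * inverse \<alpha> * onorm (G_fun LF DJ uh zh)
     + 1/2 * MJ * \<rho>\<^sup>2"

end

theory Submission
  imports Defs
begin

text \<open>
  Write \<open>e = u - uh\<close> and \<open>B = LF uh\<close>. By definition of \<open>G(zh)\<close>,
  \<open>DJ uh e = G(zh) e + B e zh\<close>. Since \<open>F u = 0\<close>, Taylor's formula with Lipschitz derivative
  bounds the linearised residual \<open>F uh + B e\<close> by \<open>L\<rho> \<rho>\<^sup>2 / 2\<close> in the dual norm, so
  \<open>B e zh = - F uh zh\<close> up to \<open>L\<rho> \<rho>\<^sup>2 \<parallel>zh\<parallel> / 2\<close>; likewise \<open>J u - J uh = DJ uh e\<close> up to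
  \<open>MJ \<rho>\<^sup>2 / 2\<close>. The remaining term \<open>G(zh) e\<close> is at most \<open>\<parallel>G(zh)\<parallel> \<parallel>e\<parallel>\<close>, and testing the
  coercivity of \<open>B\<close> with \<open>e\<close> gives \<open>\<alpha> \<parallel>e\<parallel> \<le> \<parallel>F uh\<parallel> + \<parallel>F uh + B e\<parallel> \<le> r + L\<rho> \<rho>\<^sup>2 / 2\<close>.
\<close>

lemma abs_increment_le_of_deriv_le_linear:
  fixes h h' :: "real \<Rightarrow> real"
  assumes deriv: "\<And>t. 0 \<le> t \<Longrightarrow> t \<le> 1 \<Longrightarrow> (h has_real_derivative h' t) (at t)"
    and bound: "\<And>t. 0 \<le> t \<Longrightarrow> t \<le> 1 \<Longrightarrow> \<bar>h' t\<bar> \<le> K * t"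
  shows "\<bar>h 1 - h 0\<bar> \<le> K / 2"
proof -
  have "(\<lambda>t. h t - K / 2 * t\<^sup>2) 1 \<le> (\<lambda>t. h t - K / 2 * t\<^sup>2) 0"
  proof (rule DERIV_nonpos_imp_nonincreasing[of 0 1])
    fix t :: real assume t: "0 \<le> t" "t \<le> 1"
    have "((\<lambda>t. h t - K / 2 * t\<^sup>2) has_real_derivative h' t - K * t) (at t)"
      using deriv[OF t] by (auto intro!: derivative_eq_intros)
    with bound[OF t] show "\<exists>y. ((\<lambda>t. h t - K / 2 * t\<^sup>2) has_real_derivative y) (at t) \<and> y \<le> 0"
      by force
  qed simp
  moreover have "(\<lambda>t. h t + K / 2 * t\<^sup>2) 0 \<le> (\<lambda>t. h t + K / 2 * t\<^sup>2) 1"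
  proof (rule DERIV_nonneg_imp_nondecreasing[of 0 1])
    fix t :: real assume t: "0 \<le> t" "t \<le> 1"
    have "((\<lambda>t. h t + K / 2 * t\<^sup>2) has_real_derivative h' t + K * t) (at t)"
      using deriv[OF t] by (auto intro!: derivative_eq_intros)
    with bound[OF t] show "\<exists>y. ((\<lambda>t. h t + K / 2 * t\<^sup>2) has_real_derivative y) (at t) \<and> 0 \<le> y"
      by force
  qed simp
  ultimately have "h 1 - h 0 \<le> K / 2" and "h 0 - h 1 \<le> K / 2" by simp_all
  then show ?thesis by linarith
qed

lemma taylor_remainder_le_of_lipschitz_derivative:
  fixes \<phi> :: "'a::real_normed_vector \<Rightarrow> real" and D :: "'a \<Rightarrow> 'a \<Rightarrow> real"
  assumes deriv: "\<And>w. w \<in> closed_segment x0 u \<Longrightarrow> (\<phi> has_derivative D w) (at w)"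
    and lip: "\<And>w h. w \<in> closed_segment x0 u \<Longrightarrow> \<bar>D w h - D x0 h\<bar> \<le> M * norm (w - x0) * norm h"
  shows "\<bar>\<phi> u - \<phi> x0 - D x0 (u - x0)\<bar> \<le> M / 2 * (norm (u - x0))\<^sup>2"
proof -
  define e where "e = u - x0"
  define p where "p t = x0 + t *\<^sub>R e" for t :: real
  have p_in: "p t \<in> closed_segment x0 u" if "0 \<le> t" "t \<le> 1" for t
    using that unfolding in_segment p_def e_def
    by (intro exI[of _ t]) (simp add: algebra_simps)
  have "\<bar>(\<phi> (p 1) - 1 * D x0 e) - (\<phi> (p 0) - 0 * D x0 e)\<bar> \<le> M * (norm e)\<^sup>2 / 2"
  proof (rule abs_increment_le_of_deriv_le_linear)
    fix t :: real assume t: "0 \<le> t" "t \<le> 1"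
    have lin: "linear (D (p t))" using deriv[OF p_in[OF t]] has_derivative_linear by blast
    have "(p has_derivative (\<lambda>s. s *\<^sub>R e)) (at t)"
      unfolding p_def by (auto intro!: derivative_eq_intros)
    from has_derivative_compose[OF this deriv[OF p_in[OF t]]]
    have "((\<lambda>t. \<phi> (p t)) has_derivative (\<lambda>s. D (p t) (s *\<^sub>R e))) (at t)"
      by (simp add: o_def)
    moreover have "(\<lambda>s. D (p t) (s *\<^sub>R e)) = (*) (D (p t) e)"
      by (auto simp: linear_scale[OF lin])
    ultimately have "((\<lambda>t. \<phi> (p t)) has_real_derivative D (p t) e) (at t)"
      by (simp add: has_field_derivative_def)
    then show "((\<lambda>t. \<phi> (p t) - t * D x0 e) has_real_derivative D (p t) e - D x0 e) (at t)"
      by (auto intro!: derivative_eq_intros)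
    show "\<bar>D (p t) e - D x0 e\<bar> \<le> M * (norm e)\<^sup>2 * t"
      using lip[OF p_in[OF t], of e] t by (simp add: p_def power2_eq_square ac_simps)
  qed
  then show ?thesis by (simp add: p_def e_def algebra_simps)
qed

lemma taylor_remainder_le_on_cball:
  fixes \<phi> :: "'a::real_normed_vector \<Rightarrow> real" and D :: "'a \<Rightarrow> ('a \<Rightarrow>\<^sub>L real)"
  assumes deriv: "\<And>w. w \<in> cball x0 \<rho> \<Longrightarrow> (\<phi> has_derivative blinfun_apply (D w)) (at w)"
    and lip: "\<And>w. w \<in> cball x0 \<rho> \<Longrightarrow> norm (D w - D x0) \<le> M * norm (w - x0)"
    and M_nonneg: "M \<ge> 0" and u: "u \<in> cball x0 \<rho>"
  shows "\<bar>\<phi> u - \<phi> x0 - D x0 (u - x0)\<bar> \<le> M / 2 * \<rho>\<^sup>2"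
proof -
  have segment: "closed_segment x0 u \<subseteq> cball x0 \<rho>"
    using u by (intro closed_segment_subset) (auto intro: order_trans[OF zero_le_dist])
  have "\<bar>\<phi> u - \<phi> x0 - D x0 (u - x0)\<bar> \<le> M / 2 * (norm (u - x0))\<^sup>2"
  proof (rule taylor_remainder_le_of_lipschitz_derivative)
    fix w h assume "w \<in> closed_segment x0 u"
    then have w: "w \<in> cball x0 \<rho>" using segment by blast
    show "(\<phi> has_derivative blinfun_apply (D w)) (at w)" by (rule deriv[OF w])
    have "\<bar>D w h - D x0 h\<bar> \<le> norm (D w - D x0) * norm h"
      using norm_blinfun[of "D w - D x0" h] by (simp add: blinfun.diff_left)
    also have "\<dots> \<le> M * norm (w - x0) * norm h"
      using lip[OF w] by (simp add: mult_right_mono)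
    finally show "\<bar>D w h - D x0 h\<bar> \<le> M * norm (w - x0) * norm h" .
  qed
  also have "\<dots> \<le> M / 2 * \<rho>\<^sup>2"
    using u M_nonneg by (intro mult_left_mono power_mono) (auto simp: dist_norm norm_minus_commute)
  finally show ?thesis .
qed

lemma dual_taylor_remainder_le_on_cball:
  fixes F :: "'a::real_normed_vector \<Rightarrow> ('b::real_normed_vector \<Rightarrow>\<^sub>L real)"
    and DF :: "'a \<Rightarrow> ('a \<Rightarrow>\<^sub>L ('b \<Rightarrow>\<^sub>L real))"
  assumes deriv: "\<And>w. w \<in> cball x0 \<rho> \<Longrightarrow> (F has_derivative blinfun_apply (DF w)) (at w)"
    and lip: "\<And>w. w \<in> cball x0 \<rho> \<Longrightarrow> norm (DF w - DF x0) \<le> M * norm (w - x0)"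
    and M_nonneg: "M \<ge> 0" and u: "u \<in> cball x0 \<rho>"
  shows "norm (F u - F x0 - DF x0 (u - x0)) \<le> M / 2 * \<rho>\<^sup>2"
proof (rule norm_blinfun_bound)
  fix v :: 'b
  have segment: "closed_segment x0 u \<subseteq> cball x0 \<rho>"
    using u by (intro closed_segment_subset) (auto intro: order_trans[OF zero_le_dist])
  have "\<bar>F u v - F x0 v - DF x0 (u - x0) v\<bar> \<le> M * norm v / 2 * (norm (u - x0))\<^sup>2"
  proof (rule taylor_remainder_le_of_lipschitz_derivative)
    fix w assume "w \<in> closed_segment x0 u"
    then have w: "w \<in> cball x0 \<rho>" using segment by blast
    show "((\<lambda>w. F w v) has_derivative (\<lambda>h. DF w h v)) (at w)"
      using bounded_linear.has_derivative[OF blinfun.bounded_linear_left deriv[OF w]] .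
    fix h
    have "\<bar>DF w h v - DF x0 h v\<bar> \<le> norm ((DF w - DF x0) h) * norm v"
      using norm_blinfun[of "(DF w - DF x0) h" v] by (simp add: blinfun.diff_left)
    also have "\<dots> \<le> M * norm (w - x0) * norm h * norm v"
      using order_trans[OF norm_blinfun mult_right_mono[OF lip[OF w]]]
      by (intro mult_right_mono) auto
    finally show "\<bar>DF w h v - DF x0 h v\<bar> \<le> M * norm v * norm (w - x0) * norm h"
      by (simp add: ac_simps)
  qed
  also have "\<dots> \<le> M * norm v / 2 * \<rho>\<^sup>2"
    using u M_nonneg by (intro mult_left_mono power_mono) (auto simp: dist_norm norm_minus_commute)
  finally show "norm ((F u - F x0 - DF x0 (u - x0)) v) \<le> M / 2 * \<rho>\<^sup>2 * norm v"
    by (simp add: blinfun.diff_left ac_simps)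
qed (use M_nonneg in simp)

lemma lipschitz_on_cball_const_nonneg:
  fixes f :: "'a::real_normed_vector \<Rightarrow> 'b::real_normed_vector" and x v :: 'a
  assumes "\<rho> > 0" and "v \<noteq> 0"
    and lip: "\<And>w z. w \<in> cball x \<rho> \<Longrightarrow> z \<in> cball x \<rho> \<Longrightarrow> norm (f w - f z) \<le> L * norm (w - z)"
  shows "L \<ge> 0"
proof -
  define z where "z = x + (\<rho> / norm v) *\<^sub>R v"
  have "z \<in> cball x \<rho>" and "norm (z - x) = \<rho>"
    using assms(1,2) by (simp_all add: z_def dist_norm)
  then have "0 \<le> L * \<rho>"
    using lip[of z x] by (metis centre_in_cball less_imp_le norm_ge_zero order_trans assms(1))
  then show ?thesis using assms(1) by (simp add: zero_le_mult_iff)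
qed

lemma bounded_linear_G_fun: "bounded_linear (G_fun LF DJ uh zh)"
  unfolding G_fun_def
  by (intro bounded_linear_sub blinfun.bounded_linear_right
        bounded_linear_compose[OF blinfun.bounded_linear_left[of zh]])

lemma E_J_nonneg_of_trivial_space:
  fixes F :: "'a::real_normed_vector \<Rightarrow> ('a \<Rightarrow>\<^sub>L real)"
  assumes trivial: "\<And>v::'a. v = 0" and MJ_nonneg: "MJ \<ge> 0"
  shows "E_J F LF DJ uh zh \<rho> r \<alpha> L\<rho> MJ \<ge> 0"
proof -
  have "G_fun LF DJ uh zh = (\<lambda>v. 0)"
  proof
    show "G_fun LF DJ uh zh v = 0" for v using trivial[of v] by (simp add: G_fun_def)
  qed
  then show ?thesis using trivial[of zh] MJ_nonneg by (simp add: E_J_def onorm_zero)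
qed

lemma coercive_error_le_residual:
  fixes B :: "'a::real_normed_vector \<Rightarrow>\<^sub>L ('a \<Rightarrow>\<^sub>L real)" and f :: "'a \<Rightarrow>\<^sub>L real"
  assumes coerc: "\<alpha> * (norm e)\<^sup>2 \<le> B e e"
  shows "\<alpha> * norm e \<le> norm f + norm (f + B e)"
proof (cases "e = 0")
  case False
  have "\<alpha> * norm e * norm e \<le> (f + B e) e - f e"
    using coerc by (simp add: power2_eq_square blinfun.add_left ac_simps)
  also have "\<dots> \<le> (norm f + norm (f + B e)) * norm e"
    using norm_blinfun[of f e] norm_blinfun[of "f + B e" e] by (simp add: algebra_simps)
  finally show ?thesis using False by simp
qed simp

theorem theorem8p3:
  fixes F :: "'a::{real_inner,complete_space} \<Rightarrow> ('a \<Rightarrow>\<^sub>L real)"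
    and LF :: "'a \<Rightarrow> ('a \<Rightarrow>\<^sub>L ('a \<Rightarrow>\<^sub>L real))"
    and J :: "'a \<Rightarrow> real"
    and DJ :: "'a \<Rightarrow> ('a \<Rightarrow>\<^sub>L real)"
    and U :: "'a set"
    and uh u zh :: 'a
    and \<rho> r \<alpha> L\<rho> MJ :: real
  assumes U_open: "open U"
    and F_deriv: "\<And>w. w \<in> U \<Longrightarrow> (F has_derivative blinfun_apply (LF w)) (at w)"
    and uh_in: "uh \<in> U"
    and rho_pos: "\<rho> > 0"
    and ball_sub: "cball uh \<rho> \<subseteq> U"
    and resid: "norm (F uh) \<le> r"
    and B_sym: "\<And>x y. LF uh x y = LF uh y x"
    and alpha_pos: "\<alpha> > 0"
    and B_coerc: "\<And>v. LF uh v v \<ge> \<alpha> * (norm v)\<^sup>2"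
    and LF_lip: "\<And>w z. w \<in> cball uh \<rho> \<Longrightarrow> z \<in> cball uh \<rho> \<Longrightarrow>
                   norm (LF w - LF z) \<le> L\<rho> * norm (w - z)"
    and u_in: "u \<in> cball uh \<rho>"
    and u_sol: "F u = 0"
    and J_deriv: "\<And>w. w \<in> U \<Longrightarrow> (J has_derivative blinfun_apply (DJ w)) (at w)"
    and DJ_lip: "\<And>w z. w \<in> cball uh \<rho> \<Longrightarrow> z \<in> cball uh \<rho> \<Longrightarrow>
                   norm (DJ w - DJ z) \<le> MJ * norm (w - z)"
    and MJ_nonneg: "MJ \<ge> 0"
  shows "J u \<in> {J uh - E_J F LF DJ uh zh \<rho> r \<alpha> L\<rho> MJ ..
                 J uh + E_J F LF DJ uh zh \<rho> r \<alpha> L\<rho> MJ}"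
proof -
  let ?G = "G_fun LF DJ uh zh"
  define e where "e = u - uh"
  \<comment> \<open>On the zero space \<open>LF_lip\<close> holds even for negative \<open>L\<rho>\<close>.\<close>
  consider "\<And>v::'a. v = 0" | "L\<rho> \<ge> 0"
    using lipschitz_on_cball_const_nonneg[OF rho_pos _ LF_lip] by blast
  then show ?thesis
  proof cases
    case 1
    have "u = uh" using 1[of u] 1[of uh] by simp
    then show ?thesis using E_J_nonneg_of_trivial_space[OF 1 MJ_nonneg] by simp
  next
    case 2
    have "norm (F u - F uh - LF uh e) \<le> L\<rho> / 2 * \<rho>\<^sup>2"
      unfolding e_def
      by (rule dual_taylor_remainder_le_on_cball[OF _ _ 2 u_in])
        (use F_deriv ball_sub LF_lip rho_pos in auto)
    then have residual: "norm (F uh + LF uh e) \<le> L\<rho> / 2 * \<rho>\<^sup>2"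
      using u_sol norm_minus_cancel[of "F uh + LF uh e"] by simp
    have J_remainder: "\<bar>J u - J uh - DJ uh e\<bar> \<le> MJ / 2 * \<rho>\<^sup>2"
      unfolding e_def
      by (rule taylor_remainder_le_on_cball[OF _ _ MJ_nonneg u_in])
        (use J_deriv ball_sub DJ_lip rho_pos in auto)
    have "\<alpha> * norm e \<le> r + L\<rho> / 2 * \<rho>\<^sup>2"
      using coercive_error_le_residual[OF B_coerc[of e], where f = "F uh"] resid residual
      by linarith
    then have "norm e \<le> (r + 1/2 * L\<rho> * \<rho>\<^sup>2) * inverse \<alpha>"
      using alpha_pos by (simp add: field_simps)
    then have "onorm ?G * norm e \<le> onorm ?G * ((r + 1/2 * L\<rho> * \<rho>\<^sup>2) * inverse \<alpha>)"
      by (rule mult_left_mono[OF _ onorm_pos_le[OF bounded_linear_G_fun]])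
    then have "\<bar>?G e\<bar> \<le> (r + 1/2 * L\<rho> * \<rho>\<^sup>2) * inverse \<alpha> * onorm ?G"
      using onorm[OF bounded_linear_G_fun[of LF DJ uh zh], of e] by (simp add: ac_simps)
    moreover have "\<bar>F uh zh + LF uh e zh\<bar> \<le> 1/2 * L\<rho> * \<rho>\<^sup>2 * norm zh"
      using order_trans[OF norm_blinfun mult_right_mono[OF residual norm_ge_zero], of zh]
      by (simp add: blinfun.add_left)
    moreover have "J u - J uh = ?G e - F uh zh + (F uh zh + LF uh e zh) + (J u - J uh - DJ uh e)"
      by (simp add: G_fun_def)
    ultimately show ?thesis using J_remainder unfolding E_J_def atLeastAtMost_iff by linarith
  qed
qed

end
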